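(* Let $\mathcal A$ be a commutative unital algebra, $L\in\operatorname{End}(\mathcal A)$, $R\in\operatorname{End}(\mathcal A)$ a linear map (renormalization scheme), and let $\phi=\phi_L\colon H_R\to\mathcal A$ be the unique unital algebra morphism with $\phi_L\circ B_+=L\circ\phi_L$. Let $\phi_-$, $\phi_+$, $\bar\phi$ be the counterterm, renormalized map and Bogoliubov map of $\phi$ with respect to $R$. Suppose $L$ is linear over the counterterms, i.e. $L(\phi_-(h)\,a)=\phi_-(h)\,L(a)$ for all $h\in H_R$, $a\in\mathcal A$. Then $$\bar\phi\circ B_+=L\circ\phi_+ .$$
   Context: $H_R$ is the Connes–Kreimer Hopf algebra of rooted trees over a field $\mathbb K$ of characteristic zero: the free commutative algebra on rooted trees, with basis the rooted forests, unit the empty forest $\mathbb 1$, grading by number of nodes; $B_+$ grafts all trees of a forest onto a new root; the coproduct $\Delta$ is the unique algebra morphism with $\Delta(\mathbb 1)=\mathbb 1\otimes\mathbb 1$ and $\Delta\circ B_+=B_+\otimes\mathbb 1+(\mathrm{id}\otimes B_+)\circ\Delta$; the counit $\varepsilon$ vanishes on all nonempty forests. For linear maps $\psi,\chi\colon H_R\to\mathcal A$, the convolution is $\psi\star\chi=m_{\mathcal A}\circ(\psi\otimes\chi)\circ\Delta$. Writing $\tilde\Delta(x)=\Delta(x)-\mathbb 1\otimes x-x\otimes\mathbb 1=\sum x'\otimes x''$, the counterterm $\phi_-\colon H_R\to\mathcal A$ is the linear map with $\phi_-(\mathbb 1)=1$ and, recursively on degree, $\phi_-(x)=-R\big(\phi(x)+\sum\phi_-(x')\phi(x'')\big)$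 for $x$ of positive degree; then $\phi_+:=\phi_-\star\phi$ and $\bar\phi:=\phi_-\star\phi-\phi_-$. *)

theory Defs
  imports Main "HOL-Library.Multiset" "HOL.Vector_Spaces"
begin

text \<open>A rooted forest is a
multiset of trees; the empty forest is the unit.  Forests form the basis of H_R, and the
product of forests is multiset union.  A K-linear map H_R \<rightarrow> A is identified with its
values on the basis of forests, i.e. with a function of type forest \<Rightarrow> 'a.\<close>

datatype tree = Node "tree multiset"

type_synonym forest = "tree multiset"

definition Bplus :: "forest \<Rightarrow> forest" where
  "Bplus f = {# Node f #}"

primrec nodesT :: "tree \<Rightarrow> nat" where
  "nodesT (Node ts) = 1 + sum_mset (image_mset nodesT ts)"

definition deg :: "forest \<Rightarrow> nat" where
  "deg f = sum_mset (image_mset nodesT f)"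

text \<open>An element of H_R \<otimes> H_R with nonnegative integer coefficients on the basis of
pairs of forests is represented as a multiset of pairs of forests.\<close>

definition tprod :: "(forest \<times> forest) multiset \<Rightarrow> (forest \<times> forest) multiset
    \<Rightarrow> (forest \<times> forest) multiset" where
  "tprod X Y = sum_mset (image_mset (\<lambda>p. image_mset (\<lambda>q. (fst p + fst q, snd p + snd q)) Y) X)"

definition tunit :: "(forest \<times> forest) multiset" where
  "tunit = {# ({#}, {#}) #}"

text \<open>Coproduct of a tree T = B_+(f):
  Delta(B_+ f) = B_+ f \<otimes> 1 + (id \<otimes> B_+)(Delta f),
with Delta multiplicative on forests.\<close>

primrec coprodT :: "tree \<Rightarrow> (forest \<times> forest) multiset" where
  "coprodT (Node ts) =
     {# ({# Node ts #}, {#}) #} +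
     image_mset (\<lambda>p. (fst p, {# Node (snd p) #}))
       (fold_mset tprod tunit (image_mset coprodT ts))"

definition coprod :: "forest \<Rightarrow> (forest \<times> forest) multiset" where
  "coprod f = fold_mset tprod tunit (image_mset coprodT f)"

text \<open>Reduced coproduct (for nonempty forests x): Delta x - 1 \<otimes> x - x \<otimes> 1.\<close>
definition red_coprod :: "forest \<Rightarrow> (forest \<times> forest) multiset" where
  "red_coprod x = coprod x - {# ({#}, x), (x, {#}) #}"

definition conv :: "(forest \<Rightarrow> 'a::comm_ring_1) \<Rightarrow> (forest \<Rightarrow> 'a) \<Rightarrow> forest \<Rightarrow> 'a" where
  "conv \<psi> \<chi> x = sum_mset (image_mset (\<lambda>p. \<psi> (fst p) * \<chi> (snd p)) (coprod x))"

primrec phiLT :: "('a::comm_ring_1 \<Rightarrow> 'a) \<Rightarrow> tree \<Rightarrow> 'a" where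
  "phiLT L (Node ts) = L (prod_mset (image_mset (phiLT L) ts))"

definition phiL :: "('a::comm_ring_1 \<Rightarrow> 'a) \<Rightarrow> forest \<Rightarrow> 'a" where
  "phiL L f = prod_mset (image_mset (phiLT L) f)"

text \<open>Recursion on degree, implemented with a fuel argument n; the recursion is correct
as long as the fuel is at least the degree of the argument, since both legs of the reduced
coproduct have strictly smaller degree.\<close>
primrec cterm_aux :: "('a::comm_ring_1 \<Rightarrow> 'a) \<Rightarrow> (forest \<Rightarrow> 'a) \<Rightarrow> nat \<Rightarrow> forest \<Rightarrow> 'a" where
  "cterm_aux R \<phi> 0 x = (if x = {#} then 1 else 0)"
| "cterm_aux R \<phi> (Suc n) x =
     (if x = {#} then 1
      else - R (\<phi> x + sum_mset (image_mset (\<lambda>p. cterm_aux R \<phi> n (fst p) * \<phi> (snd p))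
                                               (red_coprod x))))"

definition counterterm :: "('a::comm_ring_1 \<Rightarrow> 'a) \<Rightarrow> (forest \<Rightarrow> 'a) \<Rightarrow> forest \<Rightarrow> 'a" where
  "counterterm R \<phi> x = cterm_aux R \<phi> (deg x) x"

definition renormalized :: "('a::comm_ring_1 \<Rightarrow> 'a) \<Rightarrow> (forest \<Rightarrow> 'a) \<Rightarrow> forest \<Rightarrow> 'a" where
  "renormalized R \<phi> = conv (counterterm R \<phi>) \<phi>"

definition bogoliubov :: "('a::comm_ring_1 \<Rightarrow> 'a) \<Rightarrow> (forest \<Rightarrow> 'a) \<Rightarrow> forest \<Rightarrow> 'a" where
  "bogoliubov R \<phi> x = conv (counterterm R \<phi>) \<phi> x - counterterm R \<phi> x"

definition comm_algebra_over :: "('k::field_char_0 \<Rightarrow> 'a::comm_ring_1 \<Rightarrow> 'a) \<Rightarrow> bool" where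
  "comm_algebra_over sc \<longleftrightarrow> Vector_Spaces.vector_space sc \<and> (\<forall>c a b. sc c (a * b) = sc c a * b)"

end

theory Submission
  imports Defs
begin

text \<open>
  The theorem is a direct consequence of the cocycle property of B_+,
    Delta (B_+ f) = B_+ f \<otimes> 1 + (id \<otimes> B_+) (Delta f),
  which is the defining recursion of the coproduct.  Convolving any map psi with a
  character phi satisfying phi \<circ> B_+ = L \<circ> phi therefore gives
    (psi \<star> phi)(B_+ f) = psi(B_+ f) + \<Sum> psi(f') L(phi(f'')),
  and if L is additive and linear over the values of psi, the sum is L((psi \<star> phi) f).
  Taking psi = phi_- and subtracting phi_-(B_+ f) yields the Bogoliubov identity.
\<close>

lemma tprod_tunit: "tprod X tunit = X"
  by (simp add: tprod_def tunit_def)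

lemma coprod_Bplus:
  "coprod (Bplus f) = {# (Bplus f, {#}) #} + image_mset (\<lambda>p. (fst p, Bplus (snd p))) (coprod f)"
  by (simp add: coprod_def Bplus_def tprod_tunit)

lemma phiL_empty: "phiL L {#} = 1"
  by (simp add: phiL_def)

lemma phiL_Bplus: "phiL L (Bplus f) = L (phiL L f)"
  by (simp add: phiL_def Bplus_def)

lemma additive_sum_mset:
  assumes "L 0 = 0" and "\<And>a b. L (a + b) = L a + L b"
  shows "L (sum_mset (image_mset g M)) = sum_mset (image_mset (\<lambda>x. L (g x)) M)"
  by (induction M) (simp_all add: assms)

lemma conv_Bplus:
  fixes \<psi> \<phi> :: "forest \<Rightarrow> 'a::comm_ring_1"
  assumes unital: "\<phi> {#} = 1"
    and intertwines: "\<And>g. \<phi> (Bplus g) = L (\<phi> g)"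
    and L_zero: "L 0 = 0"
    and L_add: "\<And>a b. L (a + b) = L a + L b"
    and L_psi_linear: "\<And>h a. L (\<psi> h * a) = \<psi> h * L a"
  shows "conv \<psi> \<phi> (Bplus f) = \<psi> (Bplus f) + L (conv \<psi> \<phi> f)"
proof -
  have "conv \<psi> \<phi> (Bplus f)
      = \<psi> (Bplus f) + sum_mset (image_mset (\<lambda>p. \<psi> (fst p) * L (\<phi> (snd p))) (coprod f))"
    by (simp add: conv_def coprod_Bplus unital intertwines image_mset.compositionality comp_def)
  also have "\<dots> = \<psi> (Bplus f) + L (conv \<psi> \<phi> f)"
    by (simp add: conv_def additive_sum_mset[OF L_zero L_add] L_psi_linear)
  finally show ?thesis .
qed

theorem mainTheorem3:
  fixes sc :: "'k::field_char_0 \<Rightarrow> 'a::comm_ring_1 \<Rightarrow> 'a"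
    and L R :: "'a \<Rightarrow> 'a"
  assumes "comm_algebra_over sc"
    and "Vector_Spaces.linear sc sc L"
    and "Vector_Spaces.linear sc sc R"
    and "\<forall>h a. L (counterterm R (phiL L) h * a) = counterterm R (phiL L) h * L a"
  shows "\<forall>f. bogoliubov R (phiL L) (Bplus f) = L (renormalized R (phiL L) f)"
proof
  fix f
  interpret L_lin: Vector_Spaces.linear sc sc L by (rule assms(2))
  have "conv (counterterm R (phiL L)) (phiL L) (Bplus f)
      = counterterm R (phiL L) (Bplus f) + L (renormalized R (phiL L) f)"
    unfolding renormalized_def
    by (rule conv_Bplus) (simp_all add: phiL_empty phiL_Bplus L_lin.add assms(4))
  then show "bogoliubov R (phiL L) (Bplus f) = L (renormalized R (phiL L) f)"
    by (simp add: bogoliubov_def)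
qed

end
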